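(* Let $n\ge 1$, $M\ge1$ be integers and $a=(a_0,\dots,a_n)\in\mathbb{Z}^{n+1}$ with $0\le a_i\le M$ and $a_0=a_n=0$. Let $G(a)$ be the directed graph defined below. Then all tropical recurrent minimal sequences with values in $V$ satisfying $a$ are periodic if and only if $G(a)$ is a disjoint union of simple cycles.
   Context: Let $V=\{j+i/(2n+2): 0\le j<M,\ 0\le i\le 2n+2,\ i,j\in\mathbb{Z}\}$ and $W=V^{2n+1}$. A vector $z=(z_0,\dots,z_N)\in\mathbb{R}^{N+1}$ satisfies $a$ and is minimal if for each $0\le k\le N-n$ the minimum $\min_{0\le i\le n}\{a_i+z_{i+k}\}$ is attained at least twice, and for each $n\le j\le N-n$ there exists $j-n\le k\le j$ with $a_{j-k}+z_j=\min_{0\le i\le n}\{a_i+z_{k+i}\}$. The directed graph $G_0$ has as vertices the elements $(z_0,\dots,z_{2n})\in W$ which (with $N=2n$) satisfy $a$ and are minimal, with an arrow from $(z_0,\dots,z_{2n})$ to $(z'_0,\dots,z'_{2n})$ iff $z_{i+1}=z'_i$ for $0\le i\le 2n-1$ (loops allowed). $G(a)$ is obtained from $G_0$ by successively removing vertices having no incoming arrow or no outgoing arrow, as long as possible. A tropical recurrent sequence is $y=(y_j)_{j\in\mathbb{Z}}$ with real entries; it satisfies $a$ if for every $k\in\mathbb{Z}$ the minimum $\min_{0\le i\le n}\{a_i+y_{i+k}\}$ is attained for at least two different $i$; it is minimal if for every $j$ there is $k$ with $j-n\le k\le j$ and $a_{j-k}+y_j=\min_{0\le i\le n}\{a_i+y_{i+k}\}$.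 It is periodic if there is $d\ge1$ with $y_{j+d}=y_j$ for all $j$. *)

theory Defs
  imports Main "HOL.Real"
begin

definition Vset :: "nat \<Rightarrow> nat \<Rightarrow> real set" where
  "Vset n M = {real j + real i / real (2*n+2) | i j. j < M \<and> i \<le> 2*n+2}"

text \<open>Finite vectors z = (z_0,...,z_N) are represented as lists of length N+1.\<close>
definition fin_tmin :: "(nat \<Rightarrow> int) \<Rightarrow> nat \<Rightarrow> real list \<Rightarrow> nat \<Rightarrow> real" where
  "fin_tmin a n z k = Min ((\<lambda>i. real_of_int (a i) + z ! (i + k)) ` {0..n})"

definition fin_satisfies :: "(nat \<Rightarrow> int) \<Rightarrow> nat \<Rightarrow> nat \<Rightarrow> real list \<Rightarrow> bool" where
  "fin_satisfies a n N z \<longleftrightarrow>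
     (\<forall>k. k + n \<le> N \<longrightarrow>
        (\<exists>i1 i2. i1 \<le> n \<and> i2 \<le> n \<and> i1 \<noteq> i2 \<and>
           real_of_int (a i1) + z ! (i1 + k) = fin_tmin a n z k \<and>
           real_of_int (a i2) + z ! (i2 + k) = fin_tmin a n z k))"

definition fin_minimal :: "(nat \<Rightarrow> int) \<Rightarrow> nat \<Rightarrow> nat \<Rightarrow> real list \<Rightarrow> bool" where
  "fin_minimal a n N z \<longleftrightarrow>
     (\<forall>j. n \<le> j \<and> j + n \<le> N \<longrightarrow>
        (\<exists>k. j \<le> k + n \<and> k \<le> j \<and>
           real_of_int (a (j - k)) + z ! j = fin_tmin a n z k))"

definition G0_verts :: "(nat \<Rightarrow> int) \<Rightarrow> nat \<Rightarrow> nat \<Rightarrow> real list set" where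
  "G0_verts a n M = {z. length z = 2*n+1 \<and> set z \<subseteq> Vset n M \<and>
                        fin_satisfies a n (2*n) z \<and> fin_minimal a n (2*n) z}"

definition G0_edges :: "(nat \<Rightarrow> int) \<Rightarrow> nat \<Rightarrow> nat \<Rightarrow> (real list \<times> real list) set" where
  "G0_edges a n M = {(z, z'). z \<in> G0_verts a n M \<and> z' \<in> G0_verts a n M \<and>
                        (\<forall>i < 2*n. z ! (i+1) = z' ! i)}"

text \<open>Vertices removed by successively deleting vertices having no incoming arrow
  or no outgoing arrow (among the vertices not yet removed), as long as possible.\<close>
inductive removed :: "'v set \<Rightarrow> ('v \<times> 'v) set \<Rightarrow> 'v \<Rightarrow> bool" for VS E where
  no_in: "v \<in> VS \<Longrightarrow> (\<forall>u. u \<in> VS \<and> (u, v) \<in> E \<longrightarrow> removed VS E u) \<Longrightarrow> removed VS E v"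
| no_out: "v \<in> VS \<Longrightarrow> (\<forall>w. w \<in> VS \<and> (v, w) \<in> E \<longrightarrow> removed VS E w) \<Longrightarrow> removed VS E v"

definition Ga_verts :: "(nat \<Rightarrow> int) \<Rightarrow> nat \<Rightarrow> nat \<Rightarrow> real list set" where
  "Ga_verts a n M = {v \<in> G0_verts a n M. \<not> removed (G0_verts a n M) (G0_edges a n M) v}"

definition Ga_edges :: "(nat \<Rightarrow> int) \<Rightarrow> nat \<Rightarrow> nat \<Rightarrow> (real list \<times> real list) set" where
  "Ga_edges a n M = G0_edges a n M \<inter> (Ga_verts a n M \<times> Ga_verts a n M)"

definition cycle_edges :: "'v list \<Rightarrow> ('v \<times> 'v) set" where
  "cycle_edges c = {(c ! i, c ! ((i + 1) mod length c)) | i. i < length c}"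

definition disjoint_union_of_simple_cycles :: "'v set \<Rightarrow> ('v \<times> 'v) set \<Rightarrow> bool" where
  "disjoint_union_of_simple_cycles VS E \<longleftrightarrow>
     (\<exists>C. (\<forall>c \<in> C. c \<noteq> [] \<and> distinct c) \<and>
          (\<forall>c \<in> C. \<forall>c' \<in> C. c \<noteq> c' \<longrightarrow> set c \<inter> set c' = {}) \<and>
          (\<Union>c \<in> C. set c) = VS \<and>
          E = (\<Union>c \<in> C. cycle_edges c))"

definition tmin :: "(nat \<Rightarrow> int) \<Rightarrow> nat \<Rightarrow> (int \<Rightarrow> real) \<Rightarrow> int \<Rightarrow> real" where
  "tmin a n y k = Min ((\<lambda>i. real_of_int (a i) + y (int i + k)) ` {0..n})"

definition trop_satisfies :: "(nat \<Rightarrow> int) \<Rightarrow> nat \<Rightarrow> (int \<Rightarrow> real) \<Rightarrow> bool" where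
  "trop_satisfies a n y \<longleftrightarrow>
     (\<forall>k. \<exists>i1 i2. i1 \<le> n \<and> i2 \<le> n \<and> i1 \<noteq> i2 \<and>
         real_of_int (a i1) + y (int i1 + k) = tmin a n y k \<and>
         real_of_int (a i2) + y (int i2 + k) = tmin a n y k)"

definition trop_minimal :: "(nat \<Rightarrow> int) \<Rightarrow> nat \<Rightarrow> (int \<Rightarrow> real) \<Rightarrow> bool" where
  "trop_minimal a n y \<longleftrightarrow>
     (\<forall>j. \<exists>k. j - int n \<le> k \<and> k \<le> j \<and>
         real_of_int (a (nat (j - k))) + y j = tmin a n y k)"

definition trop_periodic :: "(int \<Rightarrow> real) \<Rightarrow> bool" where
  "trop_periodic y \<longleftrightarrow> (\<exists>d::int. d \<ge> 1 \<and> (\<forall>j. y (j + d) = y j))"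

end

theory Submission
  imports Defs "HOL-Combinatorics.Orbits"
begin

(* A sequence y with values in V satisfies a and is minimal exactly when each of its windows
   (y_k, ..., y_(k+2n)) is a vertex of G_0; consecutive windows are then joined by arrows, every
   bi-infinite walk in G_0 arises in this way, and y is periodic iff its walk is. A vertex deleted
   by the pruning lies on no bi-infinite walk, so G_0 and G(a) have the same bi-infinite walks.
   In a digraph where every vertex has an incoming and an outgoing arrow, all bi-infinite walks
   are periodic iff it is a disjoint union of simple cycles: if arrows v -> w1 and v -> w2 both
   existed, splicing the past of a walk through v -> w1 with the future of a walk through v -> w2
   would give a walk whose periodicity forces w1 = w2. So the arrows form the graph of a map s,
   a periodic walk through x gives s^L x = x, and the orbits of s are the cycles. *)

section \<open>Digraphs whose bi-infinite walks are all periodic\<close>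

definition biinf_walk :: "('v \<times> 'v) set \<Rightarrow> (int \<Rightarrow> 'v) \<Rightarrow> bool" where
  "biinf_walk E p \<longleftrightarrow> (\<forall>j. (p j, p (j + 1)) \<in> E)"

definition periodic :: "(int \<Rightarrow> 'a) \<Rightarrow> bool" where
  "periodic p \<longleftrightarrow> (\<exists>d \<ge> 1. \<forall>j. p (j + d) = p j)"

lemma periodic_shift_mult:
  fixes p :: "int \<Rightarrow> 'a" and d m :: int
  assumes "\<forall>j. p (j + d) = p j"
  shows "p (j + m * d) = p j"
proof (induction m rule: int_induct[where k = 0])
  case base
  then show ?case by simp
next
  case (step1 m)
  have "p (j + (m + 1) * d) = p ((j + m * d) + d)" by (simp add: algebra_simps)
  with assms step1.IH show ?case by simp
next
  case (step2 m)
  have "p (j + m * d) = p ((j + (m - 1) * d) + d)" by (simp add: algebra_simps)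
  with assms step2.IH show ?case by simp
qed

lemma biinf_walk_shift:
  assumes "biinf_walk E p"
  shows "biinf_walk E (\<lambda>j. p (j + c))"
  unfolding biinf_walk_def
proof
  fix j
  have "(p (j + c), p (j + c + 1)) \<in> E" using assms by (simp add: biinf_walk_def)
  then show "(p (j + c), p (j + 1 + c)) \<in> E" by (simp add: ac_simps)
qed

lemma biinf_walk_splice:
  assumes "biinf_walk E p" "biinf_walk E q" "(p 0, q 1) \<in> E"
  shows "biinf_walk E (\<lambda>j. if j \<le> 0 then p j else q j)"
  unfolding biinf_walk_def
proof
  fix j :: int
  consider "j < 0" | "j = 0" | "j > 0" by linarith
  then show "(if j \<le> 0 then p j else q j, if j + 1 \<le> 0 then p (j + 1) else q (j + 1)) \<in> E"
    by cases (use assms in \<open>auto simp: biinf_walk_def\<close>)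
qed

lemma biinf_walk_through_vertex:
  assumes succ: "\<forall>v\<in>K. \<exists>w\<in>K. (v, w) \<in> E" and pred: "\<forall>v\<in>K. \<exists>u\<in>K. (u, v) \<in> E"
    and "v \<in> K"
  obtains p where "biinf_walk E p" "p 0 = v"
proof -
  obtain s where s: "\<forall>x\<in>K. s x \<in> K \<and> (x, s x) \<in> E" using succ by metis
  obtain r where r: "\<forall>x\<in>K. r x \<in> K \<and> (r x, x) \<in> E" using pred by metis
  have sK: "(s ^^ k) v \<in> K" and rK: "(r ^^ k) v \<in> K" for k
    by (induction k) (use s r \<open>v \<in> K\<close> in auto)
  define p where "p j = (if 0 \<le> j then (s ^^ nat j) v else (r ^^ nat (- j)) v)" for j
  have "(p j, p (j + 1)) \<in> E" for j
  proof (cases "0 \<le> j")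
    case True
    then have "p (j + 1) = s (p j)" by (simp add: p_def nat_add_distrib)
    then show ?thesis using s sK True by (simp add: p_def)
  next
    case False
    then have "nat (- j) = Suc (nat (- (j + 1)))" and succ_j: "p (j + 1) = (r ^^ nat (- (j + 1))) v"
      by (auto simp: p_def)
    then have "p j = r (p (j + 1))" using False by (simp add: p_def)
    then show ?thesis using r rK succ_j by simp
  qed
  moreover have "p 0 = v" by (simp add: p_def)
  ultimately show thesis by (intro that[of p]) (auto simp: biinf_walk_def)
qed

lemma biinf_walk_through_edge:
  assumes succ: "\<forall>v\<in>K. \<exists>w\<in>K. (v, w) \<in> E" and pred: "\<forall>v\<in>K. \<exists>u\<in>K. (u, v) \<in> E"
    and "(v, w) \<in> E" "v \<in> K" "w \<in> K"
  obtains p where "biinf_walk E p" "p 0 = v" "p 1 = w"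
proof -
  obtain p where p: "biinf_walk E p" "p 0 = v"
    using biinf_walk_through_vertex[OF succ pred \<open>v \<in> K\<close>] by blast
  obtain q where q: "biinf_walk E q" "q 0 = w"
    using biinf_walk_through_vertex[OF succ pred \<open>w \<in> K\<close>] by blast
  have "biinf_walk E (\<lambda>j. q (j - 1))" using biinf_walk_shift[OF q(1), of "- 1"] by simp
  then have "biinf_walk E (\<lambda>j. if j \<le> 0 then p j else q (j - 1))"
    by (rule biinf_walk_splice[OF p(1)]) (use p q \<open>(v, w) \<in> E\<close> in simp)
  then show thesis using that p q by fastforce
qed

lemma periodic_walks_imp_unique_successor:
  assumes succ: "\<forall>v\<in>K. \<exists>w\<in>K. (v, w) \<in> E" and pred: "\<forall>v\<in>K. \<exists>u\<in>K. (u, v) \<in> E"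
    and "E \<subseteq> K \<times> K" and periodic: "\<forall>p. biinf_walk E p \<longrightarrow> periodic p"
    and "(v, w1) \<in> E" "(v, w2) \<in> E"
  shows "w1 = w2"
proof -
  obtain p1 where p1: "biinf_walk E p1" "p1 0 = v" "p1 1 = w1"
    using biinf_walk_through_edge[OF succ pred \<open>(v, w1) \<in> E\<close>] assms(3,5) by blast
  obtain p2 where p2: "biinf_walk E p2" "p2 0 = v" "p2 1 = w2"
    using biinf_walk_through_edge[OF succ pred \<open>(v, w2) \<in> E\<close>] assms(3,6) by blast
  define q where "q j = (if j \<le> 0 then p1 j else p2 j)" for j
  have "biinf_walk E q"
    unfolding q_def by (rule biinf_walk_splice) (use p1 p2 \<open>(v, w2) \<in> E\<close> in auto)
  then obtain d where d: "d \<ge> 1" "\<forall>j. q (j + d) = q j"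
    using periodic unfolding periodic_def by blast
  obtain d1 where d1: "d1 \<ge> 1" "\<forall>j. p1 (j + d1) = p1 j"
    using periodic p1(1) unfolding periodic_def by blast
  have "1 + (- d1) * d \<le> 0"
    using mult_mono[of 1 d1 1 d] d d1 by simp
  \<comment> \<open>Going back a common multiple of both periods lands in the past of \<open>q\<close>,
    which it shares with \<open>p1\<close>.\<close>
  have "w2 = q 1" using p2 by (simp add: q_def)
  also have "\<dots> = q (1 + (- d1) * d)" by (rule periodic_shift_mult[OF d(2), symmetric])
  also have "\<dots> = p1 (1 + (- d) * d1)" using \<open>1 + (- d1) * d \<le> 0\<close> by (simp add: q_def mult.commute)
  also have "\<dots> = w1" using periodic_shift_mult[OF d1(2), of 1 "- d"] p1 by simp
  finally show ?thesis by simp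
qed

lemma periodic_walks_imp_map_graph:
  assumes succ: "\<forall>v\<in>K. \<exists>w\<in>K. (v, w) \<in> E" and pred: "\<forall>v\<in>K. \<exists>u\<in>K. (u, v) \<in> E"
    and EK: "E \<subseteq> K \<times> K" and periodic: "\<forall>p. biinf_walk E p \<longrightarrow> periodic p"
  obtains s where "\<forall>x\<in>K. s x \<in> K" "\<forall>x\<in>K. x \<in> orbit s x" "E = (\<lambda>x. (x, s x)) ` K"
proof -
  obtain s where s: "\<forall>x\<in>K. s x \<in> K \<and> (x, s x) \<in> E" using succ by metis
  have s_unique: "w = s x" if "(x, w) \<in> E" for x w
    using periodic_walks_imp_unique_successor[OF succ pred EK periodic that] s EK that by blast
  have "x \<in> orbit s x" if "x \<in> K" for x
  proof -
    obtain p where p: "biinf_walk E p" "p 0 = x"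
      using biinf_walk_through_vertex[OF succ pred \<open>x \<in> K\<close>] by blast
    have p_funpow: "p (int k) = (s ^^ k) x" for k
    proof (induction k)
      case 0
      then show ?case using p by simp
    next
      case (Suc k)
      have "(p (int k), p (int k + 1)) \<in> E" using p(1) by (simp add: biinf_walk_def)
      then show ?case using Suc s_unique by (simp add: add.commute)
    qed
    obtain d where d: "d \<ge> 1" "\<forall>j. p (j + d) = p j"
      using periodic p(1) unfolding periodic_def by blast
    then have "(s ^^ nat d) x = x" using p_funpow[of "nat d"] p(2) by (metis add_0 int_nat_eq)
    then show ?thesis using d(1) by (auto simp: orbit_altdef intro!: exI[of _ "nat d"])
  qed
  moreover have "E = (\<lambda>x. (x, s x)) ` K" using s s_unique EK by fast
  ultimately show thesis using that s by blast
qed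

definition orbit_list :: "('a \<Rightarrow> 'a) \<Rightarrow> 'a \<Rightarrow> 'a list" where
  "orbit_list s x = map (\<lambda>k. (s ^^ k) x) [0..<funpow_dist1 s x x]"

lemma set_orbit_list: "x \<in> orbit s x \<Longrightarrow> set (orbit_list s x) = orbit s x"
  unfolding orbit_list_def set_map set_upt by (rule orbit_conv_funpow_dist1[symmetric])

lemma distinct_orbit_list: "x \<in> orbit s x \<Longrightarrow> distinct (orbit_list s x)"
  unfolding orbit_list_def distinct_map set_upt by (simp add: inj_on_funpow_dist1 del: upt_Suc)

lemma orbit_list_not_Nil: "orbit_list s x \<noteq> []"
  by (simp add: orbit_list_def)

lemma cycle_edges_orbit_list:
  assumes "x \<in> orbit s x"
  shows "cycle_edges (orbit_list s x) = (\<lambda>y. (y, s y)) ` orbit s x"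
proof -
  let ?L = "funpow_dist1 s x x"
  have len: "length (orbit_list s x) = ?L" by (simp add: orbit_list_def del: upt_Suc)
  have nth: "orbit_list s x ! i = (s ^^ i) x" if "i < ?L" for i
    using that by (simp add: orbit_list_def del: upt_Suc)
  have "orbit_list s x ! ((i + 1) mod ?L) = s ((s ^^ i) x)" for i
    using funpow_mod_eq[of ?L s x "i + 1"] funpow_dist1_prop[OF assms] by (simp add: nth)
  then have "cycle_edges (orbit_list s x) = (\<lambda>i. ((s ^^ i) x, s ((s ^^ i) x))) ` {0..<?L}"
    unfolding cycle_edges_def len by (force simp: nth)
  then show ?thesis by (simp add: orbit_conv_funpow_dist1[OF assms] image_image)
qed

lemma orbit_eq_if_in_orbit:
  assumes "x \<in> orbit s x" "y \<in> orbit s x"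
  shows "orbit s y = orbit s x"
  using assms by (auto intro: orbit_trans orbit_swap)

lemma disjoint_union_of_simple_cycles_map_graph:
  assumes closed: "\<forall>x\<in>K. s x \<in> K" and recurrent: "\<forall>x\<in>K. x \<in> orbit s x"
  shows "disjoint_union_of_simple_cycles K ((\<lambda>x. (x, s x)) ` K)"
proof -
  have orbit_K: "orbit s x \<subseteq> K" if "x \<in> K" for x
  proof
    fix y assume "y \<in> orbit s x"
    then show "y \<in> K" by induction (use closed that in auto)
  qed
  \<comment> \<open>Each cycle is listed from a canonical starting vertex, so that equal orbits give
    equal lists.\<close>
  define rep where "rep x = (SOME y. y \<in> orbit s x)" for x
  have rep: "rep x \<in> orbit s x" "orbit s (rep x) = orbit s x" "rep x \<in> orbit s (rep x)"
    if "x \<in> K" for x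
  proof -
    show "rep x \<in> orbit s x" unfolding rep_def using recurrent that by (metis someI)
    then show "orbit s (rep x) = orbit s x" using recurrent that by (simp add: orbit_eq_if_in_orbit)
    then show "rep x \<in> orbit s (rep x)" using \<open>rep x \<in> orbit s x\<close> by simp
  qed
  define C where "C = (\<lambda>x. orbit_list s (rep x)) ` K"
  have "\<forall>c\<in>C. c \<noteq> [] \<and> distinct c"
    by (auto simp: C_def orbit_list_not_Nil distinct_orbit_list rep)
  moreover have "\<forall>c\<in>C. \<forall>c'\<in>C. c \<noteq> c' \<longrightarrow> set c \<inter> set c' = {}"
  proof (clarsimp simp: C_def)
    fix x x' assume x: "x \<in> K" "x' \<in> K" and "orbit_list s (rep x) \<noteq> orbit_list s (rep x')"
    then have "orbit s x \<noteq> orbit s x'" unfolding rep_def by auto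
    moreover have "orbit s x = orbit s x'" if "z \<in> orbit s x" "z \<in> orbit s x'" for z
      using orbit_eq_if_in_orbit recurrent x that by metis
    ultimately show "set (orbit_list s (rep x)) \<inter> set (orbit_list s (rep x')) = {}"
      using x rep by (auto simp: set_orbit_list)
  qed
  moreover have "(\<Union>c\<in>C. set c) = K"
    using recurrent orbit_K by (auto simp: C_def set_orbit_list rep)
  moreover have "(\<lambda>x. (x, s x)) ` K = (\<Union>c\<in>C. cycle_edges c)"
    using recurrent orbit_K by (auto simp: C_def cycle_edges_orbit_list rep)
  ultimately show ?thesis unfolding disjoint_union_of_simple_cycles_def by blast
qed

lemma cycle_edges_subset: "cycle_edges c \<subseteq> set c \<times> set c"
  by (auto simp: cycle_edges_def intro!: nth_mem mod_less_divisor)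

lemma cycle_edges_successor:
  assumes "distinct c" "i < length c" "(c ! i, w) \<in> cycle_edges c"
  shows "w = c ! ((i + 1) mod length c)"
  using assms nth_eq_iff_index_eq by (fastforce simp: cycle_edges_def)

lemma biinf_walk_around_cycle:
  assumes walk: "biinf_walk E p"
    and successor: "\<And>i w. i < length c \<Longrightarrow> (c ! i, w) \<in> E \<Longrightarrow> w = c ! ((i + 1) mod length c)"
    and "i < length c" "p j = c ! i"
  shows "p (j + int k) = c ! ((i + k) mod length c)"
proof (induction k)
  case 0
  then show ?case using assms by simp
next
  case (Suc k)
  have "(c ! ((i + k) mod length c), p (j + int k + 1)) \<in> E"
    using walk Suc.IH unfolding biinf_walk_def by metis
  moreover have "(i + k) mod length c < length c"
    using \<open>i < length c\<close> by (intro mod_less_divisor) linarith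
  ultimately have "p (j + int k + 1) = c ! (((i + k) mod length c + 1) mod length c)"
    using successor by blast
  then show ?case by (simp add: mod_Suc_eq ac_simps)
qed

lemma disjoint_union_of_simple_cycles_imp_walk_periodic:
  assumes "disjoint_union_of_simple_cycles K E" and walk: "biinf_walk E p"
  shows "periodic p"
proof -
  obtain C where simple: "\<forall>c\<in>C. c \<noteq> [] \<and> distinct c"
    and disjoint: "\<forall>c\<in>C. \<forall>c'\<in>C. c \<noteq> c' \<longrightarrow> set c \<inter> set c' = {}"
    and E: "E = (\<Union>c\<in>C. cycle_edges c)"
    using assms(1) unfolding disjoint_union_of_simple_cycles_def by blast
  have same_cycle: "c' = c" if "c \<in> C" "c' \<in> C" "x \<in> set c" "x \<in> set c'" for c c' x
    using that disjoint by blast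
  have "(p 0, p 1) \<in> E" using walk unfolding biinf_walk_def by (metis add_0)
  then obtain c where c: "c \<in> C" "p 0 \<in> set c" using E cycle_edges_subset by blast
  have successor: "w = c ! ((i + 1) mod length c)"
    if i: "i < length c" and edge: "(c ! i, w) \<in> E" for i w
  proof -
    obtain c' where c': "c' \<in> C" "(c ! i, w) \<in> cycle_edges c'" using edge E by blast
    have "c ! i \<in> set c" using i by simp
    moreover have "c ! i \<in> set c'" using c'(2) cycle_edges_subset by blast
    ultimately have "c' = c" by (rule same_cycle[OF c(1) c'(1)])
    then show ?thesis using cycle_edges_successor[of c i w] simple c(1) i c'(2) by simp
  qed
  have stays_in_c: "p j \<in> set c \<longleftrightarrow> p (j + 1) \<in> set c" for j
  proof -
    obtain c' where c': "c' \<in> C" "(p j, p (j + 1)) \<in> cycle_edges c'"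
      using walk unfolding biinf_walk_def E by blast
    then have "p j \<in> set c'" "p (j + 1) \<in> set c'" using cycle_edges_subset by blast+
    then show ?thesis using same_cycle[OF c(1) c'(1)] by auto
  qed
  have in_c: "p j \<in> set c" for j
  proof (induction j rule: int_induct[where k = 0])
    case (step2 j)
    then show ?case using stays_in_c[of "j - 1"] by simp
  qed (use c stays_in_c in auto)
  have "p (j + int (length c)) = p j" for j
    using biinf_walk_around_cycle[OF walk successor] in_c
    by (metis in_set_conv_nth mod_add_self2 mod_less)
  moreover have "int (length c) \<ge> 1" using simple c(1) by (simp add: Suc_le_eq)
  ultimately show ?thesis unfolding periodic_def by blast
qed

theorem disjoint_union_of_simple_cycles_iff_walks_periodic:
  assumes "E \<subseteq> K \<times> K"
    and "\<forall>v\<in>K. \<exists>w\<in>K. (v, w) \<in> E" and "\<forall>v\<in>K. \<exists>u\<in>K. (u, v) \<in> E"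
  shows "disjoint_union_of_simple_cycles K E \<longleftrightarrow> (\<forall>p. biinf_walk E p \<longrightarrow> periodic p)"
proof
  assume "disjoint_union_of_simple_cycles K E"
  then show "\<forall>p. biinf_walk E p \<longrightarrow> periodic p"
    using disjoint_union_of_simple_cycles_imp_walk_periodic by blast
next
  assume "\<forall>p. biinf_walk E p \<longrightarrow> periodic p"
  with assms obtain s where "\<forall>x\<in>K. s x \<in> K" "\<forall>x\<in>K. x \<in> orbit s x" "E = (\<lambda>x. (x, s x)) ` K"
    by (blast elim: periodic_walks_imp_map_graph)
  then show "disjoint_union_of_simple_cycles K E"
    using disjoint_union_of_simple_cycles_map_graph by simp
qed

section \<open>Pruning\<close>

lemma removed_not_on_biinf_walk:
  assumes "removed VS E v" and E: "E \<subseteq> VS \<times> VS" and walk: "biinf_walk E p"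
  shows "p j \<noteq> v"
  using assms(1)
proof (induction arbitrary: j rule: removed.induct)
  case (no_in v)
  show ?case
  proof
    assume "p j = v"
    then have "(p (j - 1), v) \<in> E" using walk unfolding biinf_walk_def by (metis diff_add_cancel)
    then show False using no_in.IH E by blast
  qed
next
  case (no_out v)
  show ?case
  proof
    assume "p j = v"
    then have "(v, p (j + 1)) \<in> E" using walk unfolding biinf_walk_def by blast
    then show False using no_out.IH E by blast
  qed
qed

lemma not_removed_successor:
  assumes "v \<in> VS" "\<not> removed VS E v"
  shows "\<exists>w\<in>{u \<in> VS. \<not> removed VS E u}. (v, w) \<in> E"
proof (rule ccontr)
  assume "\<not> ?thesis"
  then have "removed VS E v" using removed.no_out[OF assms(1)] by blast
  with assms(2) show False ..
qed

lemma not_removed_predecessor: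
  assumes "v \<in> VS" "\<not> removed VS E v"
  shows "\<exists>u\<in>{u \<in> VS. \<not> removed VS E u}. (u, v) \<in> E"
proof (rule ccontr)
  assume "\<not> ?thesis"
  then have "removed VS E v" using removed.no_in[OF assms(1)] by blast
  with assms(2) show False ..
qed

lemma G0_edges_subset: "G0_edges a n M \<subseteq> G0_verts a n M \<times> G0_verts a n M"
  by (auto simp: G0_edges_def)

lemma Ga_edges_subset: "Ga_edges a n M \<subseteq> Ga_verts a n M \<times> Ga_verts a n M"
  by (auto simp: Ga_edges_def)

lemma Ga_verts_successor: "\<forall>v\<in>Ga_verts a n M. \<exists>w\<in>Ga_verts a n M. (v, w) \<in> Ga_edges a n M"
  using not_removed_successor by (fastforce simp: Ga_verts_def Ga_edges_def)

lemma Ga_verts_predecessor: "\<forall>v\<in>Ga_verts a n M. \<exists>u\<in>Ga_verts a n M. (u, v) \<in> Ga_edges a n M"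
  using not_removed_predecessor by (fastforce simp: Ga_verts_def Ga_edges_def)

lemma biinf_walk_Ga_edges_iff: "biinf_walk (Ga_edges a n M) p \<longleftrightarrow> biinf_walk (G0_edges a n M) p"
proof
  assume "biinf_walk (Ga_edges a n M) p"
  then show "biinf_walk (G0_edges a n M) p" by (auto simp: biinf_walk_def Ga_edges_def)
next
  assume walk: "biinf_walk (G0_edges a n M) p"
  have "p j \<in> Ga_verts a n M" for j
  proof -
    have "p j \<in> G0_verts a n M" using walk G0_edges_subset unfolding biinf_walk_def by blast
    moreover have "\<not> removed (G0_verts a n M) (G0_edges a n M) (p j)"
      using removed_not_on_biinf_walk[OF _ G0_edges_subset walk, of "p j" j] by auto
    ultimately show ?thesis by (simp add: Ga_verts_def)
  qed
  with walk show "biinf_walk (Ga_edges a n M) p" by (auto simp: biinf_walk_def Ga_edges_def)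
qed

section \<open>Windows of tropical recurrent sequences\<close>

definition window :: "nat \<Rightarrow> (int \<Rightarrow> 'a) \<Rightarrow> int \<Rightarrow> 'a list" where
  "window n y k = map (\<lambda>i. y (k + int i)) [0..<2 * n + 1]"

lemma length_window [simp]: "length (window n y k) = 2 * n + 1"
  by (simp add: window_def)

lemma nth_window [simp]: "i < 2 * n + 1 \<Longrightarrow> window n y k ! i = y (k + int i)"
  by (simp add: window_def del: upt_Suc)

lemma fin_tmin_window:
  assumes "k' \<le> n"
  shows "fin_tmin a n (window n y k) k' = tmin a n y (k + int k')"
  unfolding fin_tmin_def tmin_def
  using assms by (intro arg_cong[where f = Min] image_cong) (auto simp: ac_simps)

lemma fin_satisfies_window_iff:
  "(\<forall>k. fin_satisfies a n (2 * n) (window n y k)) \<longleftrightarrow> trop_satisfies a n y"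
proof
  assume fin: "\<forall>k. fin_satisfies a n (2 * n) (window n y k)"
  show "trop_satisfies a n y"
    unfolding trop_satisfies_def
  proof
    fix k
    have "fin_satisfies a n (2 * n) (window n y k)" using fin ..
    then obtain i1 i2 where "i1 \<le> n" "i2 \<le> n" "i1 \<noteq> i2"
      "real_of_int (a i1) + window n y k ! i1 = fin_tmin a n (window n y k) 0"
      "real_of_int (a i2) + window n y k ! i2 = fin_tmin a n (window n y k) 0"
      unfolding fin_satisfies_def by (auto dest: spec[of _ 0])
    then show "\<exists>i1 i2. i1 \<le> n \<and> i2 \<le> n \<and> i1 \<noteq> i2 \<and>
        real_of_int (a i1) + y (int i1 + k) = tmin a n y k \<and>
        real_of_int (a i2) + y (int i2 + k) = tmin a n y k"
      by (intro exI[of _ i1] exI[of _ i2]) (auto simp: fin_tmin_window ac_simps)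
  qed
next
  assume trop: "trop_satisfies a n y"
  show "\<forall>k. fin_satisfies a n (2 * n) (window n y k)"
    unfolding fin_satisfies_def
  proof (intro allI impI)
    fix k k' assume "k' + n \<le> 2 * n"
    then have "k' \<le> n" by simp
    obtain i1 i2 where "i1 \<le> n" "i2 \<le> n" "i1 \<noteq> i2"
      "real_of_int (a i1) + y (int i1 + (k + int k')) = tmin a n y (k + int k')"
      "real_of_int (a i2) + y (int i2 + (k + int k')) = tmin a n y (k + int k')"
      using trop unfolding trop_satisfies_def by blast
    with \<open>k' \<le> n\<close> show "\<exists>i1 i2. i1 \<le> n \<and> i2 \<le> n \<and> i1 \<noteq> i2 \<and>
        real_of_int (a i1) + window n y k ! (i1 + k') = fin_tmin a n (window n y k) k' \<and>
        real_of_int (a i2) + window n y k ! (i2 + k') = fin_tmin a n (window n y k) k'"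
      by (intro exI[of _ i1] exI[of _ i2]) (auto simp: fin_tmin_window ac_simps)
  qed
qed

lemma fin_minimal_centre_iff:
  "fin_minimal a n (2 * n) z \<longleftrightarrow> (\<exists>k \<le> n. real_of_int (a (n - k)) + z ! n = fin_tmin a n z k)"
proof -
  have "n \<le> j \<and> j + n \<le> 2 * n \<longleftrightarrow> j = n" for j by linarith
  then show ?thesis unfolding fin_minimal_def by auto
qed

lemma fin_minimal_window_iff:
  "(\<forall>k. fin_minimal a n (2 * n) (window n y k)) \<longleftrightarrow> trop_minimal a n y"
proof
  assume fin: "\<forall>k. fin_minimal a n (2 * n) (window n y k)"
  show "trop_minimal a n y"
    unfolding trop_minimal_def
  proof
    fix j
    obtain k where "k \<le> n"
      "real_of_int (a (n - k)) + window n y (j - int n) ! n = fin_tmin a n (window n y (j - int n)) k"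
      using fin[rule_format, of "j - int n"] unfolding fin_minimal_centre_iff by blast
    then show "\<exists>K. j - int n \<le> K \<and> K \<le> j \<and> real_of_int (a (nat (j - K))) + y j = tmin a n y K"
      by (intro exI[of _ "j - int n + int k"]) (auto simp: fin_tmin_window nat_diff_distrib)
  qed
next
  assume trop: "trop_minimal a n y"
  show "\<forall>k. fin_minimal a n (2 * n) (window n y k)"
  proof
    fix k
    obtain K where "k \<le> K" "K \<le> k + int n"
      "real_of_int (a (nat (k + int n - K))) + y (k + int n) = tmin a n y K"
      using trop[unfolded trop_minimal_def, rule_format, of "k + int n"] by auto
    moreover have "K = k + int (nat (K - k))" "nat (k + int n - K) = n - nat (K - k)"
      using \<open>k \<le> K\<close> by auto
    ultimately show "fin_minimal a n (2 * n) (window n y k)"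
      unfolding fin_minimal_centre_iff
      by (intro exI[of _ "nat (K - k)"]) (auto simp: fin_tmin_window)
  qed
qed

lemma window_in_G0_verts_iff:
  "(\<forall>k. window n y k \<in> G0_verts a n M) \<longleftrightarrow>
     (\<forall>j. y j \<in> Vset n M) \<and> trop_satisfies a n y \<and> trop_minimal a n y"
proof -
  have "(\<forall>k. set (window n y k) \<subseteq> Vset n M) \<longleftrightarrow> (\<forall>j. y j \<in> Vset n M)"
  proof
    assume in_V: "\<forall>k. set (window n y k) \<subseteq> Vset n M"
    show "\<forall>j. y j \<in> Vset n M"
    proof
      fix j
      have "y j = window n y j ! 0" by simp
      also have "\<dots> \<in> set (window n y j)" by (rule nth_mem) simp
      finally show "y j \<in> Vset n M" using in_V by blast
    qed
  qed (auto simp: window_def)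
  then show ?thesis
    unfolding G0_verts_def fin_satisfies_window_iff[symmetric] fin_minimal_window_iff[symmetric]
    by auto
qed

lemma biinf_walk_window_iff:
  "biinf_walk (G0_edges a n M) (window n y) \<longleftrightarrow> (\<forall>k. window n y k \<in> G0_verts a n M)"
proof -
  have "\<forall>i < 2 * n. window n y k ! (i + 1) = window n y (k + 1) ! i" for k
    by (simp add: ac_simps)
  then show ?thesis unfolding biinf_walk_def G0_edges_def by auto
qed

lemma window_of_biinf_walk:
  assumes walk: "biinf_walk (G0_edges a n M) p"
  shows "p = window n (\<lambda>j. p j ! 0)"
proof
  fix j
  have shift: "p j ! (i + 1) = p (j + 1) ! i" if "i < 2 * n" for i j
    using walk that unfolding biinf_walk_def G0_edges_def by blast
  have "p j ! i = p (j + int i) ! 0" if "i \<le> 2 * n" for i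
    using that
  proof (induction i arbitrary: j)
    case (Suc i)
    then show ?case using shift[of i j] by (simp add: ac_simps)
  qed simp
  moreover have "length (p j) = 2 * n + 1"
    using walk unfolding biinf_walk_def G0_edges_def G0_verts_def by blast
  ultimately show "p j = window n (\<lambda>j. p j ! 0) j"
    by (intro nth_equalityI) auto
qed

lemma periodic_window_iff: "periodic (window n y) \<longleftrightarrow> periodic y"
proof
  assume "periodic (window n y)"
  then obtain d where "d \<ge> 1" and per: "\<forall>j. window n y (j + d) = window n y j"
    unfolding periodic_def by blast
  have "y (j + d) = y j" for j
    using arg_cong[where f = "\<lambda>z. z ! 0", OF per[rule_format, of j]] by simp
  with \<open>d \<ge> 1\<close> show "periodic y" unfolding periodic_def by blast
next
  assume "periodic y"
  then obtain d where "d \<ge> 1" and per: "\<forall>j. y (j + d) = y j" unfolding periodic_def by blast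
  have "y (j + d + int i) = y (j + int i)" for j i
    using per[rule_format, of "j + int i"] by (simp add: ac_simps)
  then have "window n y (j + d) = window n y j" for j by (simp add: window_def)
  with \<open>d \<ge> 1\<close> show "periodic (window n y)" unfolding periodic_def by blast
qed

lemma trop_periodic_iff_periodic: "trop_periodic y \<longleftrightarrow> periodic y"
  by (simp add: trop_periodic_def periodic_def)

lemma walks_periodic_iff_sequences_periodic:
  "(\<forall>p. biinf_walk (G0_edges a n M) p \<longrightarrow> periodic p) \<longleftrightarrow>
   (\<forall>y. (\<forall>j. y j \<in> Vset n M) \<and> trop_satisfies a n y \<and> trop_minimal a n y \<longrightarrow> trop_periodic y)"
  (is "?walks \<longleftrightarrow> ?sequences")
proof
  assume ?walks
  show ?sequences
  proof (intro allI impI)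
    fix y assume "(\<forall>j. y j \<in> Vset n M) \<and> trop_satisfies a n y \<and> trop_minimal a n y"
    then have "biinf_walk (G0_edges a n M) (window n y)"
      by (simp add: biinf_walk_window_iff window_in_G0_verts_iff)
    with \<open>?walks\<close> have "periodic (window n y)" by blast
    then have "periodic y" by (simp add: periodic_window_iff)
    then show "trop_periodic y" by (simp add: trop_periodic_iff_periodic)
  qed
next
  assume ?sequences
  show ?walks
  proof (intro allI impI)
    fix p assume walk: "biinf_walk (G0_edges a n M) p"
    define y where "y j = p j ! 0" for j
    have p: "p = window n y" unfolding y_def by (rule window_of_biinf_walk[OF walk])
    with walk have "(\<forall>j. y j \<in> Vset n M) \<and> trop_satisfies a n y \<and> trop_minimal a n y"
      by (simp add: biinf_walk_window_iff window_in_G0_verts_iff)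
    with \<open>?sequences\<close> have "periodic y" by (simp add: trop_periodic_iff_periodic)
    then show "periodic p" by (simp add: p periodic_window_iff)
  qed
qed

theorem lemma2:
  fixes n M :: nat and a :: "nat \<Rightarrow> int"
  assumes "n \<ge> 1" and "M \<ge> 1"
    and "\<forall>i \<le> n. 0 \<le> a i \<and> a i \<le> int M"
    and "a 0 = 0" and "a n = 0"
  shows "(\<forall>y :: int \<Rightarrow> real.
            (\<forall>j. y j \<in> Vset n M) \<and> trop_satisfies a n y \<and> trop_minimal a n y
              \<longrightarrow> trop_periodic y)
         \<longleftrightarrow> disjoint_union_of_simple_cycles (Ga_verts a n M) (Ga_edges a n M)"
proof -
  have "(\<forall>y :: int \<Rightarrow> real.
          (\<forall>j. y j \<in> Vset n M) \<and> trop_satisfies a n y \<and> trop_minimal a n y \<longrightarrow> trop_periodic y)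
        \<longleftrightarrow> (\<forall>p. biinf_walk (G0_edges a n M) p \<longrightarrow> periodic p)"
    by (rule walks_periodic_iff_sequences_periodic[symmetric])
  also have "\<dots> \<longleftrightarrow> (\<forall>p. biinf_walk (Ga_edges a n M) p \<longrightarrow> periodic p)"
    by (simp add: biinf_walk_Ga_edges_iff)
  also have "\<dots> \<longleftrightarrow> disjoint_union_of_simple_cycles (Ga_verts a n M) (Ga_edges a n M)"
    by (rule disjoint_union_of_simple_cycles_iff_walks_periodic
        [OF Ga_edges_subset Ga_verts_successor Ga_verts_predecessor, symmetric])
  finally show ?thesis .
qed

end
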